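(* Suppose the e-values are valid, i.e. $\mathbb{E}[e_t\mid\mathcal{F}_{t-1}]\le1$ a.s. whenever $\theta_t=0$, and let $(\lambda_t)_{t\ge1}$ be a sequence of random variables with values in $(0,1)$ such that each $\lambda_t$ is $\mathcal{F}_{t-1}$-measurable. Define $$\widehat{\mathrm{FDP}}^{\mathrm{SAFFRON}}_{\mathrm{e}}(t)=\sum_{j=1}^t\frac{\alpha_j}{R_{j-1}+1}\cdot\frac{\mathbb{1}\{e_j<1/\lambda_j\}}{1-\lambda_j},\qquad \mathrm{FDP}^*_{\mathrm{e}}(t)=\sum_{j\in\mathcal{H}_0(t)}\frac{\alpha_j}{R_{j-1}+1}.$$ Then (a) $\mathbb{E}[\widehat{\mathrm{FDP}}^{\mathrm{SAFFRON}}_{\mathrm{e}}(t)]\ge\mathbb{E}[\mathrm{FDP}^*_{\mathrm{e}}(t)]$ for all $t\ge1$; and (b) if the $\mathcal{F}_{t-1}$-measurable testing levels satisfy $\widehat{\mathrm{FDP}}^{\mathrm{SAFFRON}}_{\mathrm{e}}(t)\le\alpha$ almost surely for every $t\ge1$, then $\mathrm{FDR}(t)\le\alpha$ for all $t\ge1$.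
   Context: Let $\alpha\in(0,1)$ be a target level. Hypotheses are indexed by $t=1,2,\dots$; $\theta_t\in\{0,1\}$ is a fixed (non-random) indicator with $\theta_t=0$ iff the $t$-th null hypothesis is true. $e_1,e_2,\dots$ are nonnegative random variables (e-values). Testing levels $\alpha_1,\alpha_2,\dots$ are nonnegative random variables and the decisions are $\delta_t=\mathbb{1}\{e_t\ge 1/\alpha_t\}$ (with $\delta_t=0$ when $\alpha_t=0$). Let $\mathcal{F}_t=\sigma(\delta_1,\dots,\delta_t)$, $\mathcal{F}_0$ trivial; each $\alpha_t$ is required to be $\mathcal{F}_{t-1}$-measurable. $R_t=\sum_{j=1}^t\delta_j$, $R_0=0$. $\mathcal{H}_0(t)=\{j\le t:\theta_j=0\}$. $\mathrm{FDR}(t)=\mathbb{E}\big[\sum_{j\in\mathcal{H}_0(t)}\delta_j/(R_t\vee 1)\big]$. *)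

theory Defs
  imports "HOL-Probability.Probability"
begin

text \<open>Hypotheses are indexed by t = 1,2,...; values at index 0 are irrelevant.
  e t : e-value, lev t : testing level alpha_t, both random variables on M.\<close>

definition decision :: "(nat \<Rightarrow> 'a \<Rightarrow> real) \<Rightarrow> (nat \<Rightarrow> 'a \<Rightarrow> real) \<Rightarrow> nat \<Rightarrow> 'a \<Rightarrow> real" where
  "decision e lev t x = (if lev t x \<noteq> 0 \<and> e t x \<ge> 1 / lev t x then 1 else 0)"

definition rejections :: "(nat \<Rightarrow> 'a \<Rightarrow> real) \<Rightarrow> (nat \<Rightarrow> 'a \<Rightarrow> real) \<Rightarrow> nat \<Rightarrow> 'a \<Rightarrow> real" where
  "rejections e lev t x = (\<Sum>j\<in>{1..t}. decision e lev j x)"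

text \<open>Filtration F_t = sigma(delta_1, ..., delta_t); F_0 is trivial. Since each delta_j is
  0/1-valued, sigma(delta_j) is generated by the event {delta_j = 1}.\<close>
definition filt :: "'a measure \<Rightarrow> (nat \<Rightarrow> 'a \<Rightarrow> real) \<Rightarrow> (nat \<Rightarrow> 'a \<Rightarrow> real) \<Rightarrow> nat \<Rightarrow> 'a measure" where
  "filt M e lev t = sigma (space M)
     {{x \<in> space M. decision e lev j x = 1} | j. j \<in> {1..t}}"

definition nulls :: "(nat \<Rightarrow> nat) \<Rightarrow> nat \<Rightarrow> nat set" where
  "nulls \<theta> t = {j \<in> {1..t}. \<theta> j = 0}"

definition FDP :: "(nat \<Rightarrow> nat) \<Rightarrow> (nat \<Rightarrow> 'a \<Rightarrow> real) \<Rightarrow> (nat \<Rightarrow> 'a \<Rightarrow> real) \<Rightarrow> nat \<Rightarrow> 'a \<Rightarrow> real" where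
  "FDP \<theta> e lev t x = (\<Sum>j\<in>nulls \<theta> t. decision e lev j x) / max (rejections e lev t x) 1"

definition FDR :: "'a measure \<Rightarrow> (nat \<Rightarrow> nat) \<Rightarrow> (nat \<Rightarrow> 'a \<Rightarrow> real) \<Rightarrow> (nat \<Rightarrow> 'a \<Rightarrow> real) \<Rightarrow> nat \<Rightarrow> real" where
  "FDR M \<theta> e lev t = prob_space.expectation M (FDP \<theta> e lev t)"

definition FDP_hat_saffron :: "(nat \<Rightarrow> 'a \<Rightarrow> real) \<Rightarrow> (nat \<Rightarrow> 'a \<Rightarrow> real) \<Rightarrow> (nat \<Rightarrow> 'a \<Rightarrow> real) \<Rightarrow> nat \<Rightarrow> 'a \<Rightarrow> real" where
  "FDP_hat_saffron e lev lam t x =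
     (\<Sum>j\<in>{1..t}. lev j x / (rejections e lev (j - 1) x + 1)
        * (if e j x < 1 / lam j x then 1 else 0) / (1 - lam j x))"

definition FDP_star :: "(nat \<Rightarrow> nat) \<Rightarrow> (nat \<Rightarrow> 'a \<Rightarrow> real) \<Rightarrow> (nat \<Rightarrow> 'a \<Rightarrow> real) \<Rightarrow> nat \<Rightarrow> 'a \<Rightarrow> real" where
  "FDP_star \<theta> e lev t x = (\<Sum>j\<in>nulls \<theta> t. lev j x / (rejections e lev (j - 1) x + 1))"

end

theory Submission
  imports Defs
begin

text \<open>For a null j, the e-value e_j is valid given F_(j-1), so the conditional Markov
  inequality gives P(e_j \<ge> 1/lambda_j | F_(j-1)) \<le> lambda_j. Hence the SAFFRON factor
  1{e_j < 1/lambda_j} / (1 - lambda_j) has F_(j-1)-conditional mean at least 1, and since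
  alpha_j / (R_(j-1) + 1) is F_(j-1)-measurable, every null term of FDP* is dominated in expectation
  by the corresponding term of the estimate; this is (a). For (b), delta_j \<le> alpha_j e_j together with
  validity gives E[delta_j / (R_(j-1) + 1)] \<le> E[alpha_j / (R_(j-1) + 1)], while pointwise
  FDP(t) \<le> sum over nulls j \<le> t of delta_j / (R_(j-1) + 1), because a rejection at j makes
  R_t \<ge> R_j = R_(j-1) + 1. Thus FDR(t) \<le> E[FDP*(t)] \<le> E[FDP-hat(t)] \<le> alpha.\<close>

lemma space_filt [simp]: "space (filt M e lev n) = space M"
  unfolding filt_def by (simp add: space_measure_of_conv)

lemma sets_filt:
  "sets (filt M e lev n) = sigma_sets (space M) {{x \<in> space M. decision e lev j x = 1} | j. j \<in> {1..n}}"
  unfolding filt_def by (rule sets_measure_of) auto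

lemma borel_measurable_decision:
  assumes [measurable]: "e j \<in> borel_measurable M" "lev j \<in> borel_measurable M"
  shows "decision e lev j \<in> borel_measurable M"
  unfolding decision_def[abs_def] by measurable

lemma decision_measurable_filt:
  assumes "1 \<le> j" "j \<le> n"
  shows "decision e lev j \<in> borel_measurable (filt M e lev n)"
proof -
  let ?S = "{x \<in> space M. decision e lev j x = 1}"
  have "?S \<in> sets (filt M e lev n)"
    unfolding sets_filt by (rule sigma_sets.Basic) (use assms in auto)
  then have "(indicator ?S :: 'a \<Rightarrow> real) \<in> borel_measurable (filt M e lev n)"
    by (rule borel_measurable_indicator)
  moreover have "decision e lev j \<in> borel_measurable (filt M e lev n)
      \<longleftrightarrow> (indicator ?S :: 'a \<Rightarrow> real) \<in> borel_measurable (filt M e lev n)"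
    by (rule measurable_cong) (simp add: indicator_def decision_def)
  ultimately show ?thesis
    by simp
qed

lemma rejections_measurable_filt: "rejections e lev n \<in> borel_measurable (filt M e lev n)"
  unfolding rejections_def[abs_def]
  by (intro borel_measurable_sum decision_measurable_filt) auto

lemma subalgebra_filt:
  assumes "\<And>j. 1 \<le> j \<Longrightarrow> j \<le> n \<Longrightarrow> decision e lev j \<in> borel_measurable M"
  shows "subalgebra M (filt M e lev n)"
proof -
  have "{x \<in> space M. decision e lev j x = 1} \<in> sets M" if "1 \<le> j" "j \<le> n" for j
    using measurable_sets[OF assms[OF that], of "{1}"] by (simp add: vimage_def Int_def conj_commute)
  then have "{{x \<in> space M. decision e lev j x = 1} | j. j \<in> {1..n}} \<subseteq> sets M"
    by auto
  then show ?thesis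
    unfolding subalgebra_def sets_filt by (simp add: sets.sigma_sets_subset)
qed

lemma decision_nonneg: "0 \<le> decision e lev j x"
  by (simp add: decision_def)

lemma decision_le_level_times_e:
  assumes "0 \<le> lev j x" "0 \<le> e j x"
  shows "decision e lev j x \<le> lev j x * e j x"
proof (cases "lev j x \<noteq> 0 \<and> 1 / lev j x \<le> e j x")
  case True
  then have "lev j x * (1 / lev j x) \<le> lev j x * e j x"
    using assms by (intro mult_left_mono) auto
  then show ?thesis using True by (simp add: decision_def)
qed (use assms in \<open>auto simp: decision_def\<close>)

lemma rejections_nonneg: "0 \<le> rejections e lev n x"
  unfolding rejections_def by (intro sum_nonneg decision_nonneg)

lemma rejections_mono: "m \<le> n \<Longrightarrow> rejections e lev m x \<le> rejections e lev n x"
  unfolding rejections_def by (rule sum_mono2) (auto simp: decision_nonneg)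

lemma FDP_le_sum_decision_div:
  "FDP \<theta> e lev t x \<le> (\<Sum>j\<in>nulls \<theta> t. decision e lev j x / (rejections e lev (j - 1) x + 1))"
  unfolding FDP_def sum_divide_distrib
proof (rule sum_mono)
  fix j assume "j \<in> nulls \<theta> t"
  then have j: "1 \<le> j" "j \<le> t" by (auto simp: nulls_def)
  show "decision e lev j x / max (rejections e lev t x) 1
      \<le> decision e lev j x / (rejections e lev (j - 1) x + 1)"
  proof (cases "decision e lev j x = 1")
    case True
    have "rejections e lev j x = rejections e lev (j - 1) x + 1"
      using j True by (cases j) (simp_all add: rejections_def)
    then have "rejections e lev (j - 1) x + 1 \<le> max (rejections e lev t x) 1"
      using rejections_mono[OF j(2), of e lev x] by simp
    then show ?thesis
      using True rejections_nonneg[of e lev "j - 1" x] by (simp add: frac_le)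
  next
    case False
    then have "decision e lev j x = 0" by (simp add: decision_def split: if_splits)
    then show ?thesis by simp
  qed
qed

lemma FDP_nonneg: "0 \<le> FDP \<theta> e lev t x"
  unfolding FDP_def by (intro divide_nonneg_nonneg sum_nonneg decision_nonneg) auto

lemma FDP_le_1: "FDP \<theta> e lev t x \<le> 1"
proof -
  have "(\<Sum>j\<in>nulls \<theta> t. decision e lev j x) \<le> rejections e lev t x"
    unfolding rejections_def by (rule sum_mono2) (auto simp: nulls_def decision_nonneg)
  then have "(\<Sum>j\<in>nulls \<theta> t. decision e lev j x) \<le> max (rejections e lev t x) 1"
    by (simp add: le_max_iff_disj)
  then show ?thesis
    unfolding FDP_def by (simp add: divide_le_eq_1 less_max_iff_disj)
qed

lemma ennreal_compl_le:
  fixes a b :: ennreal and l :: real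
  assumes "a + b = 1" "b \<le> ennreal l" "0 \<le> l"
  shows "ennreal (1 - l) \<le> a"
proof -
  have "a = 1 - b"
    using assms(1,2) by (metis ennreal_add_diff_cancel_right ennreal_less_top top.not_eq_extremum order.strict_trans1)
  also have "1 - ennreal l \<le> 1 - b"
    using assms(2) by (rule ennreal_minus_mono[OF order.refl])
  finally show ?thesis using assms(3) by (simp add: ennreal_minus[symmetric])
qed

lemma nn_integral_ennreal_sum:
  assumes "\<And>i. i \<in> I \<Longrightarrow> f i \<in> borel_measurable M"
    and "\<And>i x. i \<in> I \<Longrightarrow> x \<in> space M \<Longrightarrow> 0 \<le> f i x"
  shows "(\<integral>\<^sup>+ x. ennreal (\<Sum>i\<in>I. f i x) \<partial>M) = (\<Sum>i\<in>I. \<integral>\<^sup>+ x. ennreal (f i x) \<partial>M)"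
proof -
  have "(\<integral>\<^sup>+ x. ennreal (\<Sum>i\<in>I. f i x) \<partial>M) = (\<integral>\<^sup>+ x. (\<Sum>i\<in>I. ennreal (f i x)) \<partial>M)"
    using assms(2) by (intro nn_integral_cong sum_ennreal[symmetric]) auto
  also have "\<dots> = (\<Sum>i\<in>I. \<integral>\<^sup>+ x. ennreal (f i x) \<partial>M)"
    using assms(1) by (intro nn_integral_sum) auto
  finally show ?thesis .
qed

context sigma_finite_subalgebra
begin

lemma nn_integral_mult_le_of_nn_cond_exp_le_1:
  assumes [measurable]: "h \<in> borel_measurable F" "f \<in> borel_measurable M"
    and "AE x in M. nn_cond_exp M F f x \<le> 1"
  shows "(\<integral>\<^sup>+ x. h x * f x \<partial>M) \<le> (\<integral>\<^sup>+ x. h x \<partial>M)"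
proof -
  have "(\<integral>\<^sup>+ x. h x * f x \<partial>M) = (\<integral>\<^sup>+ x. h x * nn_cond_exp M F f x \<partial>M)"
    by (rule nn_cond_exp_intg[symmetric]) measurable
  also have "\<dots> \<le> (\<integral>\<^sup>+ x. h x * 1 \<partial>M)"
    using assms(3) by (intro nn_integral_mono_AE) (auto elim!: eventually_mono simp: mult_left_le)
  finally show ?thesis by simp
qed

text \<open>Conditional Markov inequality: P(f \<ge> 1/l | F) \<le> l E[f | F] \<le> l.\<close>
lemma nn_cond_exp_below_threshold_ge:
  fixes f l :: "'a \<Rightarrow> real"
  assumes [measurable]: "f \<in> borel_measurable M" "l \<in> borel_measurable F"
    and f_nonneg: "\<And>x. x \<in> space M \<Longrightarrow> 0 \<le> f x"
    and l_pos: "\<And>x. x \<in> space M \<Longrightarrow> 0 < l x"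
    and valid: "AE x in M. nn_cond_exp M F (\<lambda>y. ennreal (f y)) x \<le> 1"
  shows "AE x in M. ennreal (1 - l x) \<le> nn_cond_exp M F (\<lambda>y. if f y < 1 / l y then 1 else 0) x"
proof -
  have [measurable]: "l \<in> borel_measurable M"
    by (rule measurable_from_subalg[OF subalg]) measurable
  define below :: "'a \<Rightarrow> ennreal" where "below y = (if f y < 1 / l y then 1 else 0)" for y
  define above :: "'a \<Rightarrow> ennreal" where "above y = (if f y < 1 / l y then 0 else 1)" for y
  have below_M [measurable]: "below \<in> borel_measurable M"
    and above_M [measurable]: "above \<in> borel_measurable M"
    unfolding below_def above_def by measurable
  have above_le: "above y \<le> ennreal (l y) * ennreal (f y)" if "y \<in> space M" for y
  proof (cases "f y < 1 / l y")
    case False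
    then have "l y * (1 / l y) \<le> l y * f y"
      using l_pos[OF that] by (intro mult_left_mono) auto
    then show ?thesis
      using False l_pos[OF that] by (simp add: above_def ennreal_mult'[symmetric])
  qed (simp add: above_def)
  have "(\<lambda>y. below y + above y) = (\<lambda>_. 1)"
    by (auto simp: below_def above_def)
  then have "AE x in M. nn_cond_exp M F below x + nn_cond_exp M F above x = nn_cond_exp M F (\<lambda>_. 1) x"
    using nn_cond_exp_sum[OF below_M above_M] by simp
  moreover have "AE x in M. 1 = nn_cond_exp M F (\<lambda>_. 1) x"
    by (rule nn_cond_exp_F_meas) measurable
  moreover have "AE x in M. nn_cond_exp M F above x
      \<le> nn_cond_exp M F (\<lambda>y. ennreal (l y) * ennreal (f y)) x"
    by (rule nn_cond_exp_mono) (auto intro: AE_I2 above_le)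
  moreover have "AE x in M. ennreal (l x) * nn_cond_exp M F (\<lambda>y. ennreal (f y)) x
      = nn_cond_exp M F (\<lambda>y. ennreal (l y) * ennreal (f y)) x"
    by (rule nn_cond_exp_prod) measurable
  ultimately have "AE x in M. ennreal (1 - l x) \<le> nn_cond_exp M F below x"
    using valid AE_space
  proof eventually_elim
    case (elim x)
    have "nn_cond_exp M F above x \<le> ennreal (l x) * nn_cond_exp M F (\<lambda>y. ennreal (f y)) x"
      using elim(3,4) by simp
    also have "\<dots> \<le> ennreal (l x)"
      using elim(5) by (simp add: mult_left_le)
    finally show ?case
      using elim(1,2) l_pos[OF elim(6)] by (intro ennreal_compl_le) auto
  qed
  then show ?thesis by (simp add: below_def[abs_def])
qed

text \<open>By the conditional Markov bound, 1{f < 1/l} / (1 - l) has F-conditional mean at least 1.\<close>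
lemma nn_integral_le_reweighted_below_threshold:
  fixes g f l :: "'a \<Rightarrow> real"
  assumes [measurable]: "g \<in> borel_measurable F" "f \<in> borel_measurable M" "l \<in> borel_measurable F"
    and g_nonneg: "\<And>x. x \<in> space M \<Longrightarrow> 0 \<le> g x"
    and f_nonneg: "\<And>x. x \<in> space M \<Longrightarrow> 0 \<le> f x"
    and l: "\<And>x. x \<in> space M \<Longrightarrow> 0 < l x \<and> l x < 1"
    and valid: "AE x in M. nn_cond_exp M F (\<lambda>y. ennreal (f y)) x \<le> 1"
  shows "(\<integral>\<^sup>+ x. ennreal (g x) \<partial>M)
    \<le> (\<integral>\<^sup>+ x. ennreal (g x * (if f x < 1 / l x then 1 else 0) / (1 - l x)) \<partial>M)"
proof -
  let ?below = "\<lambda>y. if f y < 1 / l y then 1 else 0 :: ennreal"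
  let ?weight = "\<lambda>x. ennreal (g x / (1 - l x))"
  have [measurable]: "l \<in> borel_measurable M"
    by (rule measurable_from_subalg[OF subalg]) measurable
  have "AE x in M. ennreal (1 - l x) \<le> nn_cond_exp M F ?below x"
    using f_nonneg l valid by (intro nn_cond_exp_below_threshold_ge) auto
  then have "AE x in M. ennreal (g x) \<le> ?weight x * nn_cond_exp M F ?below x"
  proof (rule AE_mp, intro AE_I2 impI)
    fix x assume x: "x \<in> space M" and below: "ennreal (1 - l x) \<le> nn_cond_exp M F ?below x"
    have "ennreal (g x) = ?weight x * ennreal (1 - l x)"
      using g_nonneg[OF x] l[OF x] by (simp add: ennreal_mult''[symmetric])
    also have "\<dots> \<le> ?weight x * nn_cond_exp M F ?below x"
      using below by (rule mult_left_mono) simp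
    finally show "ennreal (g x) \<le> ?weight x * nn_cond_exp M F ?below x" .
  qed
  then have "(\<integral>\<^sup>+ x. ennreal (g x) \<partial>M) \<le> (\<integral>\<^sup>+ x. ?weight x * nn_cond_exp M F ?below x \<partial>M)"
    by (rule nn_integral_mono_AE)
  also have "\<dots> = (\<integral>\<^sup>+ x. ?weight x * ?below x \<partial>M)"
    by (rule nn_cond_exp_intg) measurable
  also have "\<dots> = (\<integral>\<^sup>+ x. ennreal (g x * (if f x < 1 / l x then 1 else 0) / (1 - l x)) \<partial>M)"
    using g_nonneg l by (intro nn_integral_cong) auto
  finally show ?thesis .
qed

end

locale online_e_testing = prob_space M for M :: "'a measure" +
  fixes \<theta> :: "nat \<Rightarrow> nat" and e lev :: "nat \<Rightarrow> 'a \<Rightarrow> real"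
  assumes e_measurable: "\<And>t. 1 \<le> t \<Longrightarrow> e t \<in> borel_measurable M"
    and e_nonneg: "\<And>t x. 1 \<le> t \<Longrightarrow> x \<in> space M \<Longrightarrow> 0 \<le> e t x"
    and lev_measurable_filt: "\<And>t. 1 \<le> t \<Longrightarrow> lev t \<in> borel_measurable (filt M e lev (t - 1))"
    and lev_nonneg: "\<And>t x. 1 \<le> t \<Longrightarrow> x \<in> space M \<Longrightarrow> 0 \<le> lev t x"
    and e_valid: "\<And>t. 1 \<le> t \<Longrightarrow> \<theta> t = 0 \<Longrightarrow>
      AE x in M. nn_cond_exp M (filt M e lev (t - 1)) (\<lambda>y. ennreal (e t y)) x \<le> 1"
begin

abbreviation scaled_level :: "nat \<Rightarrow> 'a \<Rightarrow> real" where
  "scaled_level j x \<equiv> lev j x / (rejections e lev (j - 1) x + 1)"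

lemma decision_measurable:
  assumes "1 \<le> j"
  shows "decision e lev j \<in> borel_measurable M"
proof -
  have "\<forall>j\<in>{1..n}. decision e lev j \<in> borel_measurable M" for n
  proof (induction n)
    case (Suc n)
    then have "subalgebra M (filt M e lev n)"
      by (intro subalgebra_filt) auto
    then have "lev (Suc n) \<in> borel_measurable M"
      using measurable_from_subalg lev_measurable_filt[of "Suc n"] by simp
    then have "decision e lev (Suc n) \<in> borel_measurable M"
      using e_measurable[of "Suc n"] by (intro borel_measurable_decision) auto
    with Suc show ?case
      by (auto simp: le_Suc_eq)
  qed simp
  from this[of j] assms show ?thesis
    by simp
qed

lemma filt_subalgebra: "subalgebra M (filt M e lev n)"
  by (intro subalgebra_filt decision_measurable)

lemma measurable_from_filt: "f \<in> borel_measurable (filt M e lev n) \<Longrightarrow> f \<in> borel_measurable M"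
  by (rule measurable_from_subalg[OF filt_subalgebra])

lemma rejections_measurable: "rejections e lev n \<in> borel_measurable M"
  by (rule measurable_from_filt[OF rejections_measurable_filt])

lemma sigma_finite_subalgebra_filt: "sigma_finite_subalgebra M (filt M e lev n)"
  by (intro finite_measure_subalgebra_is_sigma_finite finite_measure_subalgebra.intro
      finite_measure_axioms finite_measure_subalgebra_axioms.intro filt_subalgebra)

lemma scaled_level_measurable_filt:
  "1 \<le> j \<Longrightarrow> scaled_level j \<in> borel_measurable (filt M e lev (j - 1))"
  by (intro borel_measurable_divide borel_measurable_add borel_measurable_const
      lev_measurable_filt rejections_measurable_filt)

lemma scaled_level_nonneg: "1 \<le> j \<Longrightarrow> x \<in> space M \<Longrightarrow> 0 \<le> scaled_level j x"
  using lev_nonneg rejections_nonneg[of e lev "j - 1" x] by simp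

lemma nn_integral_FDP_star:
  "(\<integral>\<^sup>+ x. ennreal (FDP_star \<theta> e lev t x) \<partial>M) = (\<Sum>j\<in>nulls \<theta> t. \<integral>\<^sup>+ x. ennreal (scaled_level j x) \<partial>M)"
  unfolding FDP_star_def
  by (intro nn_integral_ennreal_sum measurable_from_filt[OF scaled_level_measurable_filt] scaled_level_nonneg)
    (auto simp: nulls_def)

lemma nn_integral_decision_le_scaled_level:
  assumes j: "1 \<le> j" "\<theta> j = 0"
  shows "(\<integral>\<^sup>+ x. ennreal (decision e lev j x / (rejections e lev (j - 1) x + 1)) \<partial>M)
    \<le> (\<integral>\<^sup>+ x. ennreal (scaled_level j x) \<partial>M)"
proof -
  interpret sigma_finite_subalgebra M "filt M e lev (j - 1)"
    by (rule sigma_finite_subalgebra_filt)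
  have "(\<integral>\<^sup>+ x. ennreal (decision e lev j x / (rejections e lev (j - 1) x + 1)) \<partial>M)
      \<le> (\<integral>\<^sup>+ x. ennreal (scaled_level j x) * ennreal (e j x) \<partial>M)"
  proof (rule nn_integral_mono)
    fix x assume x: "x \<in> space M"
    have "decision e lev j x / (rejections e lev (j - 1) x + 1) \<le> scaled_level j x * e j x"
      using divide_right_mono[OF decision_le_level_times_e[of lev j x e, OF lev_nonneg[OF j(1) x] e_nonneg[OF j(1) x]]]
        rejections_nonneg[of e lev "j - 1" x]
      by simp
    then show "ennreal (decision e lev j x / (rejections e lev (j - 1) x + 1))
        \<le> ennreal (scaled_level j x) * ennreal (e j x)"
      using scaled_level_nonneg[OF j(1) x] by (simp add: ennreal_mult'[symmetric] ennreal_leI)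
  qed
  also have "\<dots> \<le> (\<integral>\<^sup>+ x. ennreal (scaled_level j x) \<partial>M)"
    by (rule nn_integral_mult_le_of_nn_cond_exp_le_1[OF
          measurable_compose[OF scaled_level_measurable_filt[OF j(1)] measurable_ennreal]
          measurable_compose[OF e_measurable[OF j(1)] measurable_ennreal] e_valid[OF j]])
  finally show ?thesis .
qed

lemma nn_integral_FDP_le_FDP_star:
  "(\<integral>\<^sup>+ x. ennreal (FDP \<theta> e lev t x) \<partial>M) \<le> (\<integral>\<^sup>+ x. ennreal (FDP_star \<theta> e lev t x) \<partial>M)"
proof -
  have "(\<integral>\<^sup>+ x. ennreal (FDP \<theta> e lev t x) \<partial>M)
      \<le> (\<integral>\<^sup>+ x. ennreal (\<Sum>j\<in>nulls \<theta> t. decision e lev j x / (rejections e lev (j - 1) x + 1)) \<partial>M)"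
    by (intro nn_integral_mono ennreal_leI FDP_le_sum_decision_div)
  also have "\<dots> = (\<Sum>j\<in>nulls \<theta> t. \<integral>\<^sup>+ x. ennreal (decision e lev j x / (rejections e lev (j - 1) x + 1)) \<partial>M)"
  proof (rule nn_integral_ennreal_sum)
    fix j assume "j \<in> nulls \<theta> t"
    then have "1 \<le> j" by (simp add: nulls_def)
    then show "(\<lambda>x. decision e lev j x / (rejections e lev (j - 1) x + 1)) \<in> borel_measurable M"
      by (intro borel_measurable_divide borel_measurable_add borel_measurable_const
          decision_measurable rejections_measurable)
  qed (simp add: decision_nonneg rejections_nonneg add_nonneg_pos)
  also have "\<dots> \<le> (\<Sum>j\<in>nulls \<theta> t. \<integral>\<^sup>+ x. ennreal (scaled_level j x) \<partial>M)"
    by (intro sum_mono nn_integral_decision_le_scaled_level) (auto simp: nulls_def)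
  finally show ?thesis
    by (simp only: nn_integral_FDP_star)
qed

lemma nn_integral_FDP_star_le_FDP_hat:
  assumes lam_measurable: "\<And>t. 1 \<le> t \<Longrightarrow> lam t \<in> borel_measurable (filt M e lev (t - 1))"
    and lam: "\<And>t x. 1 \<le> t \<Longrightarrow> x \<in> space M \<Longrightarrow> 0 < lam t x \<and> lam t x < 1"
  shows "(\<integral>\<^sup>+ x. ennreal (FDP_star \<theta> e lev t x) \<partial>M)
    \<le> (\<integral>\<^sup>+ x. ennreal (FDP_hat_saffron e lev lam t x) \<partial>M)"
proof -
  define saffron_term where
    "saffron_term j x = scaled_level j x * (if e j x < 1 / lam j x then 1 else 0) / (1 - lam j x)" for j x
  have "(\<Sum>j\<in>nulls \<theta> t. \<integral>\<^sup>+ x. ennreal (scaled_level j x) \<partial>M)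
      \<le> (\<Sum>j\<in>nulls \<theta> t. \<integral>\<^sup>+ x. ennreal (saffron_term j x) \<partial>M)"
  proof (rule sum_mono)
    fix j assume "j \<in> nulls \<theta> t"
    then have j: "1 \<le> j" "\<theta> j = 0" by (auto simp: nulls_def)
    interpret sigma_finite_subalgebra M "filt M e lev (j - 1)"
      by (rule sigma_finite_subalgebra_filt)
    show "(\<integral>\<^sup>+ x. ennreal (scaled_level j x) \<partial>M) \<le> (\<integral>\<^sup>+ x. ennreal (saffron_term j x) \<partial>M)"
      unfolding saffron_term_def
      by (intro nn_integral_le_reweighted_below_threshold scaled_level_measurable_filt e_measurable
          lam_measurable scaled_level_nonneg e_nonneg lam e_valid j)
  qed
  also have "\<dots> \<le> (\<Sum>j\<in>{1..t}. \<integral>\<^sup>+ x. ennreal (saffron_term j x) \<partial>M)"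
    by (rule sum_mono2) (simp_all add: nulls_def subset_iff)
  also have "\<dots> = (\<integral>\<^sup>+ x. ennreal (FDP_hat_saffron e lev lam t x) \<partial>M)"
  proof -
    have "saffron_term j \<in> borel_measurable M" if "1 \<le> j" for j
    proof -
      have [measurable]: "lev j \<in> borel_measurable M" "e j \<in> borel_measurable M"
        "lam j \<in> borel_measurable M" "rejections e lev (j - 1) \<in> borel_measurable M"
        using that by (auto intro: measurable_from_filt[OF lev_measurable_filt] e_measurable
            measurable_from_filt[OF lam_measurable] rejections_measurable)
      show ?thesis
        unfolding saffron_term_def[abs_def] by measurable
    qed
    moreover have "0 \<le> saffron_term j x" if "1 \<le> j" "x \<in> space M" for j x
      unfolding saffron_term_def using lam[OF that]
      by (intro divide_nonneg_nonneg mult_nonneg_nonneg[OF scaled_level_nonneg[OF that]]) auto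
    ultimately show ?thesis
      unfolding FDP_hat_saffron_def saffron_term_def[symmetric]
      by (intro nn_integral_ennreal_sum[symmetric]) auto
  qed
  finally show ?thesis
    by (simp only: nn_integral_FDP_star)
qed

lemma FDP_measurable: "FDP \<theta> e lev t \<in> borel_measurable M"
  unfolding FDP_def[abs_def]
  by (intro borel_measurable_divide borel_measurable_sum borel_measurable_max borel_measurable_const
      decision_measurable rejections_measurable) (simp add: nulls_def)

lemma FDR_eq_nn_integral_FDP: "ennreal (FDR M \<theta> e lev t) = (\<integral>\<^sup>+ x. ennreal (FDP \<theta> e lev t x) \<partial>M)"
proof -
  have "integrable M (FDP \<theta> e lev t)"
    by (intro integrable_const_bound[where B = 1] AE_I2 FDP_measurable) (simp add: FDP_nonneg FDP_le_1)
  then show ?thesis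
    unfolding FDR_def by (intro nn_integral_eq_integral[symmetric]) (auto simp: FDP_nonneg)
qed

lemma FDR_le_of_FDP_hat_le:
  assumes lam_measurable: "\<And>t. 1 \<le> t \<Longrightarrow> lam t \<in> borel_measurable (filt M e lev (t - 1))"
    and lam: "\<And>t x. 1 \<le> t \<Longrightarrow> x \<in> space M \<Longrightarrow> 0 < lam t x \<and> lam t x < 1"
    and "0 \<le> alpha" and FDP_hat_le: "AE x in M. FDP_hat_saffron e lev lam t x \<le> alpha"
  shows "FDR M \<theta> e lev t \<le> alpha"
proof -
  have "ennreal (FDR M \<theta> e lev t) \<le> (\<integral>\<^sup>+ x. ennreal (FDP_star \<theta> e lev t x) \<partial>M)"
    unfolding FDR_eq_nn_integral_FDP by (rule nn_integral_FDP_le_FDP_star)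
  also have "\<dots> \<le> (\<integral>\<^sup>+ x. ennreal (FDP_hat_saffron e lev lam t x) \<partial>M)"
    by (rule nn_integral_FDP_star_le_FDP_hat[OF lam_measurable lam])
  also have "\<dots> \<le> (\<integral>\<^sup>+ x. ennreal alpha \<partial>M)"
    using FDP_hat_le by (intro nn_integral_mono_AE) (auto elim!: eventually_mono intro: ennreal_leI)
  also have "\<dots> = ennreal alpha"
    by (simp add: emeasure_space_1)
  finally show ?thesis
    using \<open>0 \<le> alpha\<close> by (simp add: ennreal_le_iff)
qed

end

theorem proposition2:
  fixes M :: "'a measure"
    and alpha :: real
    and \<theta> :: "nat \<Rightarrow> nat"
    and e lev lam :: "nat \<Rightarrow> 'a \<Rightarrow> real"
  assumes "prob_space M"
    and "0 < alpha" and "alpha < 1"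
    and "\<And>t. t \<ge> 1 \<Longrightarrow> \<theta> t \<in> {0, 1}"
    and "\<And>t. t \<ge> 1 \<Longrightarrow> e t \<in> borel_measurable M"
    and "\<And>t x. t \<ge> 1 \<Longrightarrow> x \<in> space M \<Longrightarrow> 0 \<le> e t x"
    and "\<And>t. t \<ge> 1 \<Longrightarrow> lev t \<in> borel_measurable (filt M e lev (t - 1))"
    and "\<And>t x. t \<ge> 1 \<Longrightarrow> x \<in> space M \<Longrightarrow> 0 \<le> lev t x"
    and "\<And>t. t \<ge> 1 \<Longrightarrow> \<theta> t = 0 \<Longrightarrow>
           AE x in M. nn_cond_exp M (filt M e lev (t - 1)) (\<lambda>y. ennreal (e t y)) x \<le> 1"
    and "\<And>t. t \<ge> 1 \<Longrightarrow> lam t \<in> borel_measurable (filt M e lev (t - 1))"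
    and "\<And>t x. t \<ge> 1 \<Longrightarrow> x \<in> space M \<Longrightarrow> 0 < lam t x \<and> lam t x < 1"
  shows "(\<forall>t\<ge>1. (\<integral>\<^sup>+ x. ennreal (FDP_hat_saffron e lev lam t x) \<partial>M)
                   \<ge> (\<integral>\<^sup>+ x. ennreal (FDP_star \<theta> e lev t x) \<partial>M))
       \<and> ((\<forall>t\<ge>1. AE x in M. FDP_hat_saffron e lev lam t x \<le> alpha)
            \<longrightarrow> (\<forall>t\<ge>1. FDR M \<theta> e lev t \<le> alpha))"
proof -
  interpret online_e_testing M \<theta> e lev
    using assms(1,5-9) by (intro online_e_testing.intro online_e_testing_axioms.intro) auto
  show ?thesis
    using nn_integral_FDP_star_le_FDP_hat[OF assms(10,11)] FDR_le_of_FDP_hat_le[OF assms(10,11)] assms(2)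
    by auto
qed

end
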